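(* Let $x_0\in(0,1)$ and let $a,b:[0,1]\to\mathbb R$ with $a(x_0)=b(x_0)=0$, $a,b>0$ on $[0,1]\setminus\{x_0\}$, and assume that either (1) $a,b\in W^{1,\infty}(0,1)$, or (2) $a,b\in W^{1,1}(0,1)$ and there exist $K_1,K_2,c_1,c_2>0$ with $K_1+K_2\ge1$, $|x-x_0|^{K_1}\ge c_1a(x)$ and $|x-x_0|^{K_2}\ge c_2b(x)$ for all $x\in[0,1]$. Then 1. $\frac{1}{ab}\notin L^1(0,1)$; 2. $u(x_0)=0$ for every $u\in\mathcal K_{a,b}$.
   Context: $L^2_{\frac1a}(0,1)=\{u\in L^2(0,1):\int_0^1u^2/a\,dx<\infty\}$. $\mathcal K_a$ denotes $L^2_{\frac1a}(0,1)\cap H^1_0(0,1)$ (Dirichlet case) or $L^2_{\frac1a}(0,1)\cap H^1(0,1)$ (Neumann case), and $\mathcal K_{a,b}=\{u\in\mathcal K_a: u/\sqrt{ab}\in L^2(0,1)\}$. The conclusion holds for either choice. *)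

theory Defs
  imports "HOL-Analysis.Analysis"
begin

text \<open>Function spaces on the open interval (0,1), for real functions defined on all of R
  (values outside (0,1) are irrelevant). Elements of Sobolev spaces are identified with
  their continuous representative on [0,1], so that point values make sense.\<close>

definition L1 :: "(real \<Rightarrow> real) \<Rightarrow> bool" where
  "L1 f \<longleftrightarrow> set_integrable lborel {0<..<1::real} f"

definition L2 :: "(real \<Rightarrow> real) \<Rightarrow> bool" where
  "L2 f \<longleftrightarrow> set_borel_measurable lborel {0<..<1::real} f \<and>
                set_integrable lborel {0<..<1::real} (\<lambda>x. (f x)\<^sup>2)"

definition Linf :: "(real \<Rightarrow> real) \<Rightarrow> bool" where
  "Linf f \<longleftrightarrow> set_borel_measurable lborel {0<..<1::real} f \<and>
                (\<exists>C. AE x in lborel. x \<in> {0<..<1} \<longrightarrow> \<bar>f x\<bar> \<le> C)"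

definition test_fun :: "(real \<Rightarrow> real) \<Rightarrow> (real \<Rightarrow> real) \<Rightarrow> bool" where
  "test_fun \<phi> \<phi>' \<longleftrightarrow> (\<forall>x. (\<phi> has_real_derivative \<phi>' x) (at x)) \<and> continuous_on UNIV \<phi>' \<and>
     (\<exists>c d. 0 < c \<and> c \<le> d \<and> d < 1 \<and> (\<forall>x. x \<notin> {c..d} \<longrightarrow> \<phi> x = 0))"

definition weak_deriv :: "(real \<Rightarrow> real) \<Rightarrow> (real \<Rightarrow> real) \<Rightarrow> bool" where
  "weak_deriv u g \<longleftrightarrow> (\<forall>\<phi> \<phi>'. test_fun \<phi> \<phi>' \<longrightarrow>
     (LINT x:{0<..<1}|lborel. u x * \<phi>' x) = - (LINT x:{0<..<1}|lborel. g x * \<phi> x))"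

definition W11 :: "(real \<Rightarrow> real) \<Rightarrow> bool" where
  "W11 u \<longleftrightarrow> continuous_on {0..1} u \<and> L1 u \<and> (\<exists>g. L1 g \<and> weak_deriv u g)"

definition W1inf :: "(real \<Rightarrow> real) \<Rightarrow> bool" where
  "W1inf u \<longleftrightarrow> continuous_on {0..1} u \<and> Linf u \<and> (\<exists>g. Linf g \<and> weak_deriv u g)"

definition H1 :: "(real \<Rightarrow> real) \<Rightarrow> bool" where
  "H1 u \<longleftrightarrow> continuous_on {0..1} u \<and> L2 u \<and> (\<exists>g. L2 g \<and> weak_deriv u g)"

definition H10 :: "(real \<Rightarrow> real) \<Rightarrow> bool" where
  "H10 u \<longleftrightarrow> H1 u \<and> u 0 = 0 \<and> u 1 = 0"

definition L2w :: "(real \<Rightarrow> real) \<Rightarrow> (real \<Rightarrow> real) \<Rightarrow> bool" where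
  "L2w a u \<longleftrightarrow> L2 u \<and> set_integrable lborel {0<..<1::real} (\<lambda>x. (u x)\<^sup>2 / a x)"

text \<open>K_a: Dirichlet case (dir = True) uses H^1_0, Neumann case (dir = False) uses H^1.\<close>
definition K_a :: "bool \<Rightarrow> (real \<Rightarrow> real) \<Rightarrow> (real \<Rightarrow> real) \<Rightarrow> bool" where
  "K_a dir a u \<longleftrightarrow> L2w a u \<and> (if dir then H10 u else H1 u)"

definition K_ab :: "bool \<Rightarrow> (real \<Rightarrow> real) \<Rightarrow> (real \<Rightarrow> real) \<Rightarrow> (real \<Rightarrow> real) \<Rightarrow> bool" where
  "K_ab dir a b u \<longleftrightarrow> K_a dir a u \<and> L2 (\<lambda>x. u x / sqrt (a x * b x))"

end

theory Submission
  imports Defs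
begin

text \<open>In both cases \<open>a t * b t \<le> L * (t - x\<^sub>0)\<close> to the right of \<open>x\<^sub>0\<close>: under (1) because
  \<open>W\<^sup>1\<^sup>,\<^sup>\<infinity>\<close> functions are Lipschitz, under (2) directly from the power bounds and
  \<open>K\<^sub>1 + K\<^sub>2 \<ge> 1\<close>. Hence \<open>1 / (a b) \<ge> c / (t - x\<^sub>0)\<close>, which is not integrable at \<open>x\<^sub>0\<close>.
  If \<open>u x\<^sub>0 \<noteq> 0\<close>, continuity keeps \<open>u\<^sup>2\<close> away from zero near \<open>x\<^sub>0\<close>, so \<open>u\<^sup>2 / (a b)\<close>
  is not integrable either, contradicting \<open>u / sqrt (a b) \<in> L\<^sup>2\<close>.\<close>

lemma has_real_derivative_paste:
  fixes f g1 g2 :: "real \<Rightarrow> real"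
  assumes "(g1 has_real_derivative D) (at x)" "(g2 has_real_derivative D) (at x)" "0 < d"
    and "\<And>t. x - d < t \<Longrightarrow> t \<le> x \<Longrightarrow> f t = g1 t"
    and "\<And>t. x \<le> t \<Longrightarrow> t < x + d \<Longrightarrow> f t = g2 t"
  shows "(f has_real_derivative D) (at x)"
proof -
  have "(f has_real_derivative D) (at x within {..x})"
    by (rule has_field_derivative_transform_within[OF has_field_derivative_at_within[OF assms(1)] \<open>0 < d\<close>])
       (auto simp: assms(4) dist_real_def)
  moreover have "(f has_real_derivative D) (at x within {x..})"
    by (rule has_field_derivative_transform_within[OF has_field_derivative_at_within[OF assms(2)] \<open>0 < d\<close>])
       (auto simp: assms(5) dist_real_def)
  moreover have "{..x} \<union> {x..} = UNIV" by auto
  ultimately have "(f has_real_derivative D) (at x within {..x} \<union> {x..})"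
    unfolding has_field_derivative_iff Lim_within_Un by blast
  then show ?thesis using \<open>{..x} \<union> {x..} = UNIV\<close> by simp
qed

lemma set_integrable_greaterThanLessThan_of_continuous:
  fixes f :: "real \<Rightarrow> real"
  assumes "continuous_on {p..q} f"
  shows "set_integrable lborel {p<..<q} f"
  by (rule set_integrable_subset[OF borel_integrable_atLeastAtMost'[OF assms]]) auto

lemma set_integral_FTC_greaterThanLessThan:
  fixes F f :: "real \<Rightarrow> real"
  assumes "p \<le> q" "\<And>t. p \<le> t \<Longrightarrow> t \<le> q \<Longrightarrow> (F has_real_derivative f t) (at t)"
    and "continuous_on {p..q} f"
  shows "(LINT t:{p<..<q}|lborel. f t) = F q - F p"
proof -
  have "(LBINT t=p..q. f t) = F q - F p"
  proof (rule interval_integral_FTC_finite)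
    show "continuous_on {min p q..max p q} f" using assms(1,3) by simp
    fix t assume "min p q \<le> t" "t \<le> max p q"
    then have "(F has_real_derivative f t) (at t)" using assms(1,2) by simp
    then show "(F has_vector_derivative f t) (at t within {min p q..max p q})"
      by (simp add: has_real_derivative_iff_has_vector_derivative has_vector_derivative_at_within)
  qed
  then show ?thesis using assms(1) by (simp add: interval_lebesgue_integral_le_eq)
qed

lemma abs_set_integral_le_AE:
  fixes f k :: "real \<Rightarrow> real"
  assumes "set_integrable lborel S f" "set_integrable lborel S k"
    and "AE t in lborel. t \<in> S \<longrightarrow> \<bar>f t\<bar> \<le> k t"
  shows "\<bar>LINT t:S|lborel. f t\<bar> \<le> (LINT t:S|lborel. k t)"
proof -
  have "\<bar>LINT t:S|lborel. f t\<bar> \<le> (LINT t:S|lborel. \<bar>f t\<bar>)"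
    using set_integral_norm_bound[OF assms(1)] by simp
  also have "\<dots> \<le> (LINT t:S|lborel. k t)"
    using assms by (intro set_integral_mono_AE set_integrable_abs) auto
  finally show ?thesis .
qed

definition smoothstep :: "real \<Rightarrow> real" where
  "smoothstep s = (if s \<le> 0 then 0 else if 1 \<le> s then 1 else 3 * s^2 - 2 * s^3)"

definition smoothstep' :: "real \<Rightarrow> real" where
  "smoothstep' s = 6 * max 0 (s * (1 - s))"

lemma smoothstep_eq_0: "s \<le> 0 \<Longrightarrow> smoothstep s = 0"
  and smoothstep_eq_1: "1 \<le> s \<Longrightarrow> smoothstep s = 1"
  by (auto simp: smoothstep_def)

lemma smoothstep_bounds: "0 \<le> smoothstep s" "smoothstep s \<le> 1"
proof -
  have "3 * s^2 - 2 * s^3 = s^2 * (3 - 2 * s)" "1 - (3 * s^2 - 2 * s^3) = (1 - s)^2 * (1 + 2 * s)"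
    by (simp_all add: algebra_simps power2_eq_square power3_eq_cube)
  moreover have "0 \<le> s^2 * (3 - 2 * s)" "0 \<le> (1 - s)^2 * (1 + 2 * s)" if "0 < s" "s < 1"
    using that by simp_all
  ultimately show "0 \<le> smoothstep s" "smoothstep s \<le> 1"
    unfolding smoothstep_def by (smt (verit))+
qed

lemma smoothstep'_nonneg: "0 \<le> smoothstep' s"
  by (simp add: smoothstep'_def)

lemma smoothstep'_eq_0:
  assumes "s \<le> 0 \<or> 1 \<le> s"
  shows "smoothstep' s = 0"
proof -
  have "s * (1 - s) \<le> 0"
    using assms by (auto intro: mult_nonpos_nonneg mult_nonneg_nonpos)
  then show ?thesis unfolding smoothstep'_def by simp
qed

lemma smoothstep'_reflect: "smoothstep' (1 - s) = smoothstep' s"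
  by (simp add: smoothstep'_def mult.commute)

lemma continuous_on_smoothstep' [continuous_intros]:
  "continuous_on S f \<Longrightarrow> continuous_on S (\<lambda>t. smoothstep' (f t))"
  unfolding smoothstep'_def by (intro continuous_intros)

lemma smoothstep_has_real_derivative: "(smoothstep has_real_derivative smoothstep' s) (at s)"
proof -
  define p :: "real \<Rightarrow> real" where "p t = 3 * t^2 - 2 * t^3" for t
  have p: "(p has_real_derivative smoothstep' t) (at t)" if "0 \<le> t" "t \<le> 1" for t
  proof -
    have "smoothstep' t = 6 * t * (1 - t)"
      using that by (simp add: smoothstep'_def)
    then show ?thesis
      unfolding p_def by (auto intro!: derivative_eq_intros simp: algebra_simps power2_eq_square)
  qed
  have const: "((\<lambda>_. c) has_real_derivative smoothstep' t) (at t)" if "t \<le> 0 \<or> 1 \<le> t" for c t :: real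
    using that by (simp add: smoothstep'_eq_0)
  consider "s < 0" | "s = 0" | "0 < s" "s < 1" | "s = 1" | "1 < s" by linarith
  then show ?thesis
  proof cases
    case 1
    show ?thesis
      by (rule has_field_derivative_transform_within_open[OF const, where S="{..<0}"])
         (use 1 in \<open>auto simp: smoothstep_def\<close>)
  next
    case 2
    show ?thesis
      by (rule has_real_derivative_paste[OF const p, where d=1])
         (use 2 in \<open>auto simp: smoothstep_def p_def\<close>)
  next
    case 3
    show ?thesis
      by (rule has_field_derivative_transform_within_open[OF p, where S="{0<..<1}"])
         (use 3 in \<open>auto simp: smoothstep_def p_def\<close>)
  next
    case 4
    show ?thesis
      by (rule has_real_derivative_paste[OF p const, where d=1])
         (use 4 in \<open>auto simp: smoothstep_def p_def\<close>)
  next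
    case 5
    show ?thesis
      by (rule has_field_derivative_transform_within_open[OF const, where S="{1<..}"])
         (use 5 in \<open>auto simp: smoothstep_def\<close>)
  qed
qed

lemma continuous_on_smoothstep [continuous_intros]:
  "continuous_on S f \<Longrightarrow> continuous_on S (\<lambda>t. smoothstep (f t))"
  by (rule continuous_on_compose2[of UNIV smoothstep])
     (auto intro: DERIV_continuous_on smoothstep_has_real_derivative)

lemma smoothstep_chain [derivative_intros]:
  "(f has_real_derivative f') (at x within S) \<Longrightarrow>
    ((\<lambda>x. smoothstep (f x)) has_real_derivative smoothstep' (f x) * f') (at x within S)"
  by (rule DERIV_chain2[OF smoothstep_has_real_derivative])

definition bump :: "real \<Rightarrow> real \<Rightarrow> real \<Rightarrow> real" where
  "bump c h t = smoothstep' ((t - c) / h) / h"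

lemma bump_nonneg: "0 < h \<Longrightarrow> 0 \<le> bump c h t"
  by (simp add: bump_def smoothstep'_nonneg)

lemma bump_eq_0:
  assumes "0 < h" "t \<notin> {c<..<c + h}"
  shows "bump c h t = 0"
proof -
  have "(t - c) / h \<le> 0 \<or> 1 \<le> (t - c) / h"
    using assms by (auto simp: divide_nonpos_pos field_simps)
  then show ?thesis by (simp add: bump_def smoothstep'_eq_0)
qed

lemma continuous_on_bump: "0 < h \<Longrightarrow> continuous_on S (bump c h)"
  unfolding bump_def by (intro continuous_intros) auto

lemma smoothstep_has_real_derivative_bump:
  "0 < h \<Longrightarrow> ((\<lambda>t. smoothstep ((t - c) / h)) has_real_derivative bump c h t) (at t)"
  unfolding bump_def by (auto intro!: derivative_eq_intros)

lemma set_integral_bump: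
  assumes "0 < h" "0 \<le> c" "c + h \<le> 1"
  shows "(LINT t:{0<..<1}|lborel. bump c h t) = 1"
proof -
  have "(LINT t:{0<..<1}|lborel. bump c h t) = smoothstep ((1 - c) / h) - smoothstep ((0 - c) / h)"
    using assms by (intro set_integral_FTC_greaterThanLessThan smoothstep_has_real_derivative_bump
        continuous_on_bump) auto
  moreover have "1 \<le> (1 - c) / h" "(0 - c) / h \<le> 0"
    using assms by (simp_all add: field_simps)
  ultimately show ?thesis by (simp add: smoothstep_eq_0 smoothstep_eq_1)
qed

lemma bump_average_close:
  fixes a :: "real \<Rightarrow> real"
  assumes a: "continuous_on {0..1} a" and h: "0 < h" "0 \<le> c" "c + h \<le> 1"
    and close: "\<And>t. c < t \<Longrightarrow> t < c + h \<Longrightarrow> \<bar>a t - v\<bar> \<le> e"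
  shows "\<bar>(LINT t:{0<..<1}|lborel. a t * bump c h t) - v\<bar> \<le> e"
proof -
  have ib: "set_integrable lborel {0<..<1} (bump c h)"
    using h by (intro set_integrable_greaterThanLessThan_of_continuous continuous_on_bump)
  have iab: "set_integrable lborel {0<..<1} (\<lambda>t. a t * bump c h t)"
    using a h by (intro set_integrable_greaterThanLessThan_of_continuous continuous_intros continuous_on_bump)
  have "(LINT t:{0<..<1}|lborel. a t * bump c h t) - v
      = (LINT t:{0<..<1}|lborel. a t * bump c h t - v * bump c h t)"
    using set_integral_bump[OF h] ib iab by simp
  also have "\<bar>\<dots>\<bar> \<le> (LINT t:{0<..<1}|lborel. e * bump c h t)"
  proof (rule abs_set_integral_le_AE)
    show "AE t in lborel. t \<in> {0<..<1} \<longrightarrow> \<bar>a t * bump c h t - v * bump c h t\<bar> \<le> e * bump c h t"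
    proof (intro AE_I2 impI)
      fix t
      show "\<bar>a t * bump c h t - v * bump c h t\<bar> \<le> e * bump c h t"
      proof (cases "t \<in> {c<..<c + h}")
        case True
        then have "\<bar>a t - v\<bar> * bump c h t \<le> e * bump c h t"
          using close bump_nonneg[OF h(1)] by (intro mult_right_mono) auto
        then show ?thesis
          using bump_nonneg[OF h(1)] by (simp add: left_diff_distrib[symmetric] abs_mult)
      qed (simp add: bump_eq_0 h)
    qed
  qed (use ib iab in auto)
  also have "\<dots> = e"
    using set_integral_bump[OF h] by simp
  finally show ?thesis .
qed

text \<open>The derivative of \<open>plateau y x h\<close> is the difference of two unit-mass bumps, one just
  left of \<open>y\<close> and one just right of \<open>x\<close>; testing a weak derivative against it therefore compares
  local averages of the function near \<open>y\<close> and near \<open>x\<close>.\<close>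

definition plateau :: "real \<Rightarrow> real \<Rightarrow> real \<Rightarrow> real \<Rightarrow> real" where
  "plateau y x h t = smoothstep ((t - (y - h)) / h) * smoothstep ((x + h - t) / h)"

lemma plateau_bounds: "0 \<le> plateau y x h t" "plateau y x h t \<le> 1"
  unfolding plateau_def using smoothstep_bounds by (auto intro: mult_le_one)

lemma plateau_eq_0:
  assumes "0 < h" "t \<notin> {y - h..x + h}"
  shows "plateau y x h t = 0"
proof -
  have "(t - (y - h)) / h \<le> 0 \<or> (x + h - t) / h \<le> 0"
    using assms by (auto simp: divide_nonpos_pos)
  then show ?thesis by (auto simp: plateau_def smoothstep_eq_0)
qed

lemma plateau_has_real_derivative:
  assumes h: "0 < h" and "y \<le> x"
  shows "(plateau y x h has_real_derivative bump (y - h) h t - bump x h t) (at t)"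
proof -
  have rise: "((\<lambda>t. smoothstep ((t - (y - h)) / h)) has_real_derivative bump (y - h) h t) (at t)"
    using smoothstep_has_real_derivative_bump[OF h] .
  have "(x + h - t) / h = 1 - (t - x) / h"
    using h by (simp add: field_simps)
  then have fall: "((\<lambda>t. smoothstep ((x + h - t) / h)) has_real_derivative - bump x h t) (at t)"
    using h by (auto intro!: derivative_eq_intros simp: bump_def smoothstep'_reflect)
  have "bump (y - h) h t * smoothstep ((x + h - t) / h) - smoothstep ((t - (y - h)) / h) * bump x h t
      = bump (y - h) h t - bump x h t"
  proof (cases "t < y")
    case True
    then have "1 \<le> (x + h - t) / h" "bump x h t = 0"
      using h \<open>y \<le> x\<close> by (auto simp: field_simps bump_eq_0)
    then show ?thesis by (simp add: smoothstep_eq_1)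
  next
    case False
    then have "1 \<le> (t - (y - h)) / h" "bump (y - h) h t = 0"
      using h by (auto simp: field_simps bump_eq_0)
    then show ?thesis by (simp add: smoothstep_eq_1)
  qed
  with DERIV_mult[OF rise fall] show ?thesis
    unfolding plateau_def by (simp add: mult.commute)
qed

lemma test_fun_plateau:
  assumes "0 < h" "0 < y - h" "y \<le> x" "x + h < 1"
  shows "test_fun (plateau y x h) (\<lambda>t. bump (y - h) h t - bump x h t)"
  unfolding test_fun_def
proof (intro conjI allI plateau_has_real_derivative)
  show "continuous_on UNIV (\<lambda>t. bump (y - h) h t - bump x h t)"
    using assms by (intro continuous_intros continuous_on_bump)
  show "\<exists>c d. 0 < c \<and> c \<le> d \<and> d < 1 \<and> (\<forall>t. t \<notin> {c..d} \<longrightarrow> plateau y x h t = 0)"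
    using assms plateau_eq_0 by (intro exI[of _ "y - h"] exI[of _ "x + h"]) auto
qed (use assms in auto)

lemma weak_deriv_plateau:
  fixes a g :: "real \<Rightarrow> real"
  assumes a: "continuous_on {0..1} a" and "weak_deriv a g"
    and h: "0 < h" "0 < y - h" "y \<le> x" "x + h < 1"
  shows "(LINT t:{0<..<1}|lborel. a t * bump x h t) - (LINT t:{0<..<1}|lborel. a t * bump (y - h) h t)
      = (LINT t:{0<..<1}|lborel. g t * plateau y x h t)"
proof -
  have "set_integrable lborel {0<..<1} (\<lambda>t. a t * bump c h t)" for c
    using a h by (intro set_integrable_greaterThanLessThan_of_continuous continuous_intros continuous_on_bump)
  then have "(LINT t:{0<..<1}|lborel. a t * (bump (y - h) h t - bump x h t))
      = (LINT t:{0<..<1}|lborel. a t * bump (y - h) h t) - (LINT t:{0<..<1}|lborel. a t * bump x h t)"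
    by (simp add: right_diff_distrib)
  moreover have "(LINT t:{0<..<1}|lborel. a t * (bump (y - h) h t - bump x h t))
      = - (LINT t:{0<..<1}|lborel. g t * plateau y x h t)"
    using \<open>weak_deriv a g\<close> test_fun_plateau[OF h] unfolding weak_deriv_def by blast
  ultimately show ?thesis by simp
qed

lemma abs_set_integral_mult_plateau_le:
  fixes g :: "real \<Rightarrow> real"
  assumes g: "set_borel_measurable lborel {0<..<1} g"
    and g_bound: "AE t in lborel. t \<in> {0<..<1} \<longrightarrow> \<bar>g t\<bar> \<le> C"
    and h: "0 < h" "0 < y - h" "y \<le> x" "x + h < 1"
  shows "\<bar>LINT t:{0<..<1}|lborel. g t * plateau y x h t\<bar> \<le> C * (x - y + 2 * h)"
proof -
  define k where "k t = C * indicator {y - h..x + h} t" for t :: real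
  have restrict_k: "indicator {0<..<1} t *\<^sub>R k t = k t" for t
    using h by (auto simp: k_def indicator_def)
  have ik: "set_integrable lborel {0<..<1} k"
    unfolding set_integrable_def restrict_k unfolding k_def using h
    by (intro integrable_mult_right integrable_real_indicator) (auto simp: emeasure_lborel_Icc_eq)
  have Ik: "(LINT t:{0<..<1}|lborel. k t) = C * (x - y + 2 * h)"
    unfolding set_lebesgue_integral_def restrict_k unfolding k_def using h by simp
  have bound: "AE t in lborel. t \<in> {0<..<1} \<longrightarrow> \<bar>g t * plateau y x h t\<bar> \<le> k t"
    using g_bound
  proof eventually_elim
    case (elim t)
    show ?case
    proof (cases "t \<in> {y - h..x + h}")
      case True
      then have "\<bar>g t\<bar> * \<bar>plateau y x h t\<bar> \<le> C * 1"
        using elim h plateau_bounds[of y x h t] by (intro mult_mono) auto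
      then show ?thesis using True by (simp add: k_def abs_mult)
    qed (simp add: plateau_eq_0 h k_def)
  qed
  have "set_borel_measurable lborel {0<..<1} (\<lambda>t. g t * plateau y x h t)"
  proof -
    have "continuous_on UNIV (plateau y x h)"
      unfolding plateau_def using h by (intro continuous_intros) auto
    then have "plateau y x h \<in> borel_measurable lborel"
      by (simp add: borel_measurable_continuous_onI)
    with g show ?thesis
      unfolding set_borel_measurable_def by (simp add: mult.assoc[symmetric])
  qed
  then have "set_integrable lborel {0<..<1} (\<lambda>t. g t * plateau y x h t)"
    by (rule set_integrable_bound[OF ik]) (use bound in \<open>auto elim!: AE_mp\<close>)
  then show ?thesis
    using abs_set_integral_le_AE[OF _ ik bound] Ik by simp
qed

lemma weak_deriv_bounded_imp_lipschitz_estimate: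
  fixes a g :: "real \<Rightarrow> real"
  assumes a: "continuous_on {0..1} a" and "weak_deriv a g"
    and g: "set_borel_measurable lborel {0<..<1} g"
    and g_bound: "AE t in lborel. t \<in> {0<..<1} \<longrightarrow> \<bar>g t\<bar> \<le> C" and "0 \<le> C"
    and xy: "0 < y" "y \<le> x" "x < 1"
  shows "\<bar>a x - a y\<bar> \<le> C * (x - y)"
proof (rule field_le_epsilon)
  fix e :: real assume "0 < e"
  define \<epsilon> where "\<epsilon> = e / (2 * C + 2)"
  have "0 < \<epsilon>" using \<open>0 < e\<close> \<open>0 \<le> C\<close> by (simp add: \<epsilon>_def)
  have continuity: "\<exists>d>0. \<forall>t\<in>{0..1}. dist t z < d \<longrightarrow> dist (a t) (a z) < \<epsilon>" if "z \<in> {0..1}" for z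
    using a that \<open>0 < \<epsilon>\<close> unfolding continuous_on_iff by blast
  obtain d1 where d1: "0 < d1" "\<forall>t\<in>{0..1}. dist t y < d1 \<longrightarrow> dist (a t) (a y) < \<epsilon>"
    using continuity[of y] xy by auto
  obtain d2 where d2: "0 < d2" "\<forall>t\<in>{0..1}. dist t x < d2 \<longrightarrow> dist (a t) (a x) < \<epsilon>"
    using continuity[of x] xy by auto
  define m where "m = min \<epsilon> (min d1 (min d2 (min y (1 - x))))"
  have m: "0 < m" "m \<le> \<epsilon>" "m \<le> d1" "m \<le> d2" "m \<le> y" "m \<le> 1 - x"
    using \<open>0 < \<epsilon>\<close> d1(1) d2(1) xy by (simp_all add: m_def)
  define h where "h = m / 2"
  have h: "0 < h" "h \<le> \<epsilon>" "h < d1" "h < d2" "0 < y - h" "x + h < 1"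
    using m unfolding h_def by linarith+
  have "\<bar>a t - a y\<bar> \<le> \<epsilon>" if "y - h < t" "t < y" for t
    using d1(2)[rule_format, of t] that h xy by (simp add: dist_real_def)
  then have near_y: "\<bar>(LINT t:{0<..<1}|lborel. a t * bump (y - h) h t) - a y\<bar> \<le> \<epsilon>"
    using h xy by (intro bump_average_close[OF a]) auto
  have "\<bar>a t - a x\<bar> \<le> \<epsilon>" if "x < t" "t < x + h" for t
    using d2(2)[rule_format, of t] that h xy by (simp add: dist_real_def)
  then have near_x: "\<bar>(LINT t:{0<..<1}|lborel. a t * bump x h t) - a x\<bar> \<le> \<epsilon>"
    using h xy by (intro bump_average_close[OF a]) auto
  have "\<bar>a x - a y\<bar> \<le> C * (x - y + 2 * h) + 2 * \<epsilon>"
    using near_x near_y weak_deriv_plateau[OF a \<open>weak_deriv a g\<close> h(1,5) xy(2) h(6)]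
      abs_set_integral_mult_plateau_le[OF g g_bound h(1,5) xy(2) h(6)]
    by linarith
  also have "\<dots> \<le> C * (x - y) + (2 * C + 2) * \<epsilon>"
    using h \<open>0 \<le> C\<close> by (simp add: algebra_simps mult_left_mono)
  also have "\<dots> = C * (x - y) + e"
    using \<open>0 \<le> C\<close> by (simp add: \<epsilon>_def)
  finally show "\<bar>a x - a y\<bar> \<le> C * (x - y) + e" .
qed

lemma W1inf_lipschitz:
  assumes "W1inf a"
  obtains C where "C-lipschitz_on {0<..<1} a"
proof -
  obtain g C where a: "continuous_on {0..1} a" and "weak_deriv a g"
    and g: "set_borel_measurable lborel {0<..<1} g"
    and g_bound: "AE t in lborel. t \<in> {0<..<1} \<longrightarrow> \<bar>g t\<bar> \<le> C"
    using assms unfolding W1inf_def Linf_def by blast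
  have "AE t in lborel. t \<in> {0<..<1} \<longrightarrow> \<bar>g t\<bar> \<le> max C 0"
    using g_bound by eventually_elim auto
  then have "\<bar>a x - a y\<bar> \<le> max C 0 * (x - y)" if "y \<in> {0<..<1}" "x \<in> {0<..<1}" "y \<le> x" for x y
    using that by (intro weak_deriv_bounded_imp_lipschitz_estimate[OF a \<open>weak_deriv a g\<close> g]) auto
  then have "(max C 0)-lipschitz_on {0<..<1} a"
    by (intro lipschitz_on_leI) (simp_all add: dist_real_def abs_minus_commute)
  then show ?thesis ..
qed

lemma not_set_integrable_ge_inverse:
  fixes f :: "real \<Rightarrow> real"
  assumes "0 < \<delta>" "0 < c" and f: "\<And>t. t \<in> {x\<^sub>0<..<x\<^sub>0 + \<delta>} \<Longrightarrow> c / (t - x\<^sub>0) \<le> f t"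
  shows "\<not> set_integrable lborel {x\<^sub>0<..<x\<^sub>0 + \<delta>} f"
proof
  assume fi: "set_integrable lborel {x\<^sub>0<..<x\<^sub>0 + \<delta>} f"
  define I where "I = (LINT t:{x\<^sub>0<..<x\<^sub>0 + \<delta>}|lborel. f t)"
  have log_le: "c * (ln \<delta> - ln s) \<le> I" if s: "0 < s" "s < \<delta>" for s
  proof -
    have der: "((\<lambda>t. c * ln (t - x\<^sub>0)) has_real_derivative c / (t - x\<^sub>0)) (at t)"
      if "x\<^sub>0 + s \<le> t" for t
      using that s by (auto intro!: derivative_eq_intros simp: field_simps)
    have cont: "continuous_on {x\<^sub>0 + s..x\<^sub>0 + \<delta>} (\<lambda>t. c / (t - x\<^sub>0))"
      using s by (intro continuous_intros) auto
    have fi_s: "set_integrable lborel {x\<^sub>0 + s<..<x\<^sub>0 + \<delta>} f"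
      by (rule set_integrable_subset[OF fi]) (use s in auto)
    have "c * (ln \<delta> - ln s) = (LINT t:{x\<^sub>0 + s<..<x\<^sub>0 + \<delta>}|lborel. c / (t - x\<^sub>0))"
      using s by (subst set_integral_FTC_greaterThanLessThan[OF _ der cont]) (auto simp: right_diff_distrib)
    also have "\<dots> \<le> (LINT t:{x\<^sub>0 + s<..<x\<^sub>0 + \<delta>}|lborel. f t)"
      using s set_integrable_greaterThanLessThan_of_continuous[OF cont] fi_s
      by (intro set_integral_mono f) auto
    also have "\<dots> \<le> I"
      unfolding I_def set_lebesgue_integral_def
    proof (rule integral_mono)
      show "integrable lborel (\<lambda>t. indicator {x\<^sub>0 + s<..<x\<^sub>0 + \<delta>} t *\<^sub>R f t)"
        using fi_s unfolding set_integrable_def .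
      show "integrable lborel (\<lambda>t. indicator {x\<^sub>0<..<x\<^sub>0 + \<delta>} t *\<^sub>R f t)"
        using fi unfolding set_integrable_def .
      fix t
      have "0 \<le> f t" if "t \<in> {x\<^sub>0<..<x\<^sub>0 + \<delta>}"
      proof -
        have "0 < c / (t - x\<^sub>0)" using that \<open>0 < c\<close> by simp
        with f[OF that] show ?thesis by linarith
      qed
      then show "indicator {x\<^sub>0 + s<..<x\<^sub>0 + \<delta>} t *\<^sub>R f t \<le> indicator {x\<^sub>0<..<x\<^sub>0 + \<delta>} t *\<^sub>R f t"
        using s by (auto simp: indicator_def)
    qed
    finally show ?thesis .
  qed
  define s where "s = \<delta> * exp (- (\<bar>I\<bar> / c + 1))"
  have "0 \<le> \<bar>I\<bar> / c" using \<open>0 < c\<close> by simp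
  then have "0 < s" "s < \<delta>"
    using \<open>0 < \<delta>\<close> by (simp_all add: s_def)
  moreover have "c * (ln \<delta> - ln s) = \<bar>I\<bar> + c"
    using \<open>0 < \<delta>\<close> \<open>0 < c\<close> by (simp add: s_def ln_mult field_simps)
  ultimately have "\<bar>I\<bar> + c \<le> I"
    using log_le[of s] by simp
  then show False
    using \<open>0 < c\<close> abs_ge_self[of I] by linarith
qed

lemma vanishes_if_weighted_square_integrable:
  fixes u w :: "real \<Rightarrow> real"
  assumes u: "continuous_on {0..1} u" and "0 \<le> x\<^sub>0" "0 < \<delta>" "x\<^sub>0 + \<delta> \<le> 1" "0 < c"
    and w: "\<And>t. t \<in> {x\<^sub>0<..<x\<^sub>0 + \<delta>} \<Longrightarrow> c / (t - x\<^sub>0) \<le> w t"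
    and int: "set_integrable lborel {x\<^sub>0<..<x\<^sub>0 + \<delta>} (\<lambda>t. (u t)\<^sup>2 * w t)"
  shows "u x\<^sub>0 = 0"
proof (rule ccontr)
  assume "u x\<^sub>0 \<noteq> 0"
  define m where "m = \<bar>u x\<^sub>0\<bar> / 2"
  have "0 < m" using \<open>u x\<^sub>0 \<noteq> 0\<close> by (simp add: m_def)
  have "x\<^sub>0 \<in> {0..1}" using assms by auto
  then obtain d where "0 < d" and d: "\<forall>t\<in>{0..1}. dist t x\<^sub>0 < d \<longrightarrow> dist (u t) (u x\<^sub>0) < m"
    using u \<open>0 < m\<close> unfolding continuous_on_iff by blast
  define \<delta>' where "\<delta>' = min \<delta> d"
  have "0 < \<delta>'" "\<delta>' \<le> \<delta>" "\<delta>' \<le> d"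
    using \<open>0 < \<delta>\<close> \<open>0 < d\<close> by (simp_all add: \<delta>'_def)
  have "m\<^sup>2 * c / (t - x\<^sub>0) \<le> (u t)\<^sup>2 * w t" if t: "t \<in> {x\<^sub>0<..<x\<^sub>0 + \<delta>'}" for t
  proof -
    have "dist (u t) (u x\<^sub>0) < m"
      using d t assms \<open>\<delta>' \<le> \<delta>\<close> \<open>\<delta>' \<le> d\<close> by (auto simp: dist_real_def)
    then have "m \<le> \<bar>u t\<bar>"
      using abs_triangle_ineq2[of "u x\<^sub>0" "u t"] by (simp add: m_def dist_real_def abs_minus_commute)
    then have "m\<^sup>2 \<le> (u t)\<^sup>2"
      using power_mono[of m "\<bar>u t\<bar>" 2] \<open>0 < m\<close> by simp
    moreover have "c / (t - x\<^sub>0) \<le> w t" "0 \<le> c / (t - x\<^sub>0)"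
      using w t \<open>\<delta>' \<le> \<delta>\<close> \<open>0 < c\<close> by auto
    ultimately have "m\<^sup>2 * (c / (t - x\<^sub>0)) \<le> (u t)\<^sup>2 * w t"
      by (intro mult_mono) auto
    then show ?thesis by simp
  qed
  then have "\<not> set_integrable lborel {x\<^sub>0<..<x\<^sub>0 + \<delta>'} (\<lambda>t. (u t)\<^sup>2 * w t)"
    using \<open>0 < \<delta>'\<close> \<open>0 < m\<close> \<open>0 < c\<close> by (intro not_set_integrable_ge_inverse[where c="m\<^sup>2 * c"]) auto
  moreover have "set_integrable lborel {x\<^sub>0<..<x\<^sub>0 + \<delta>'} (\<lambda>t. (u t)\<^sup>2 * w t)"
    by (rule set_integrable_subset[OF int]) (use \<open>\<delta>' \<le> \<delta>\<close> in auto)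
  ultimately show False by blast
qed

lemma not_L1_ge_inverse:
  fixes f :: "real \<Rightarrow> real"
  assumes "x\<^sub>0 \<in> {0<..<1}" "0 < c" "\<And>t. t \<in> {x\<^sub>0<..<1} \<Longrightarrow> c / (t - x\<^sub>0) \<le> f t"
  shows "\<not> L1 f"
proof
  assume "L1 f"
  then have "set_integrable lborel {x\<^sub>0<..<x\<^sub>0 + (1 - x\<^sub>0)} f"
    unfolding L1_def by (rule set_integrable_subset) (use assms(1) in auto)
  moreover have "\<not> set_integrable lborel {x\<^sub>0<..<x\<^sub>0 + (1 - x\<^sub>0)} f"
    using assms by (intro not_set_integrable_ge_inverse) auto
  ultimately show False by blast
qed

lemma K_ab_vanishes_at_singularity:
  assumes "x\<^sub>0 \<in> {0<..<1}" "0 < c"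
    and pos: "\<And>t. t \<in> {x\<^sub>0<..<1} \<Longrightarrow> 0 < a t * b t"
    and bound: "\<And>t. t \<in> {x\<^sub>0<..<1} \<Longrightarrow> c / (t - x\<^sub>0) \<le> 1 / (a t * b t)"
    and "K_ab dir a b u"
  shows "u x\<^sub>0 = 0"
proof -
  have "H1 u" and "L2 (\<lambda>x. u x / sqrt (a x * b x))"
    using \<open>K_ab dir a b u\<close> unfolding K_ab_def K_a_def H10_def by (auto split: if_splits)
  then have u: "continuous_on {0..1} u"
    and int: "set_integrable lborel {0<..<1} (\<lambda>x. (u x / sqrt (a x * b x))\<^sup>2)"
    unfolding H1_def L2_def by blast+
  have "set_integrable lborel {x\<^sub>0<..<x\<^sub>0 + (1 - x\<^sub>0)} (\<lambda>x. (u x / sqrt (a x * b x))\<^sup>2)"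
    by (rule set_integrable_subset[OF int]) (use assms(1) in auto)
  moreover have "set_integrable lborel {x\<^sub>0<..<x\<^sub>0 + (1 - x\<^sub>0)} (\<lambda>x. (u x / sqrt (a x * b x))\<^sup>2)
      = set_integrable lborel {x\<^sub>0<..<x\<^sub>0 + (1 - x\<^sub>0)} (\<lambda>t. (u t)\<^sup>2 * (1 / (a t * b t)))"
    using pos by (intro set_integrable_cong) (auto simp: power_divide less_imp_le)
  ultimately show ?thesis
    using assms(1,2) bound
    by (intro vanishes_if_weighted_square_integrable[OF u, where c=c and \<delta>="1 - x\<^sub>0"
        and w="\<lambda>t. 1 / (a t * b t)"]) auto
qed

lemma W1inf_product_le_linear:
  assumes "W1inf a" "W1inf b" "a x\<^sub>0 = 0" "b x\<^sub>0 = 0" "x\<^sub>0 \<in> {0<..<1}"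
    and nonneg: "\<And>t. t \<in> {x\<^sub>0<..<1} \<Longrightarrow> 0 \<le> a t \<and> 0 \<le> b t"
  shows "\<exists>L. \<forall>t\<in>{x\<^sub>0<..<1}. a t * b t \<le> L * (t - x\<^sub>0)"
proof -
  obtain Ca Cb where Ca: "Ca-lipschitz_on {0<..<1} a" and Cb: "Cb-lipschitz_on {0<..<1} b"
    using W1inf_lipschitz assms(1,2) by metis
  have "a t * b t \<le> (Ca * Cb) * (t - x\<^sub>0)" if t: "t \<in> {x\<^sub>0<..<1}" for t
  proof -
    have "t \<in> {0<..<1}" using t assms(5) by auto
    then have "a t \<le> Ca * (t - x\<^sub>0)" "b t \<le> Cb * (t - x\<^sub>0)"
      using lipschitz_onD[OF Ca, of t x\<^sub>0] lipschitz_onD[OF Cb, of t x\<^sub>0] t assms(3-5)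
      by (auto simp: dist_real_def)
    then have "a t * b t \<le> (Ca * (t - x\<^sub>0)) * (Cb * (t - x\<^sub>0))"
      using nonneg[OF t] lipschitz_on_nonneg[OF Ca] t by (intro mult_mono) auto
    also have "\<dots> = (Ca * Cb) * (t - x\<^sub>0) * (t - x\<^sub>0)"
      by (simp add: algebra_simps)
    also have "\<dots> \<le> (Ca * Cb) * (t - x\<^sub>0)"
      using t assms(5) lipschitz_on_nonneg[OF Ca] lipschitz_on_nonneg[OF Cb]
      by (intro mult_left_le) auto
    finally show ?thesis .
  qed
  then show ?thesis by blast
qed

lemma powr_bounds_product_le_linear:
  fixes a b :: "real \<Rightarrow> real"
  assumes "0 < c\<^sub>1" "0 < c\<^sub>2" "1 \<le> K\<^sub>1 + K\<^sub>2" "0 \<le> x\<^sub>0"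
    and powr_bounds: "\<And>t. t \<in> {0..1} \<Longrightarrow> c\<^sub>1 * a t \<le> \<bar>t - x\<^sub>0\<bar> powr K\<^sub>1 \<and> c\<^sub>2 * b t \<le> \<bar>t - x\<^sub>0\<bar> powr K\<^sub>2"
    and nonneg: "\<And>t. t \<in> {x\<^sub>0<..<1} \<Longrightarrow> 0 \<le> a t \<and> 0 \<le> b t"
    and t: "t \<in> {x\<^sub>0<..<1}"
  shows "a t * b t \<le> 1 / (c\<^sub>1 * c\<^sub>2) * (t - x\<^sub>0)"
proof -
  have "t \<in> {0..1}" "\<bar>t - x\<^sub>0\<bar> = t - x\<^sub>0" "0 < t - x\<^sub>0" "t - x\<^sub>0 \<le> 1"
    using t \<open>0 \<le> x\<^sub>0\<close> by auto
  then have "c\<^sub>1 * a t \<le> (t - x\<^sub>0) powr K\<^sub>1" "c\<^sub>2 * b t \<le> (t - x\<^sub>0) powr K\<^sub>2"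
    using powr_bounds[of t] by simp_all
  then have "(c\<^sub>1 * a t) * (c\<^sub>2 * b t) \<le> (t - x\<^sub>0) powr K\<^sub>1 * (t - x\<^sub>0) powr K\<^sub>2"
    using nonneg[OF t] \<open>0 < c\<^sub>1\<close> \<open>0 < c\<^sub>2\<close> by (intro mult_mono) auto
  also have "\<dots> = (t - x\<^sub>0) powr (K\<^sub>1 + K\<^sub>2)"
    by (simp add: powr_add)
  also have "\<dots> \<le> t - x\<^sub>0"
    using powr_mono'[OF \<open>1 \<le> K\<^sub>1 + K\<^sub>2\<close>, of "t - x\<^sub>0"] \<open>0 < t - x\<^sub>0\<close> \<open>t - x\<^sub>0 \<le> 1\<close> by simp
  finally show ?thesis
    using \<open>0 < c\<^sub>1\<close> \<open>0 < c\<^sub>2\<close> by (simp add: field_simps)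
qed

lemma inverse_ge_of_le_linear:
  fixes p :: "real \<Rightarrow> real"
  assumes "x\<^sub>0 < 1" and pos: "\<And>t. t \<in> {x\<^sub>0<..<1} \<Longrightarrow> 0 < p t"
    and le: "\<And>t. t \<in> {x\<^sub>0<..<1} \<Longrightarrow> p t \<le> L * (t - x\<^sub>0)"
  obtains c where "0 < c" "\<And>t. t \<in> {x\<^sub>0<..<1} \<Longrightarrow> c / (t - x\<^sub>0) \<le> 1 / p t"
proof
  have "(x\<^sub>0 + 1) / 2 \<in> {x\<^sub>0<..<1}" using \<open>x\<^sub>0 < 1\<close> by auto
  with pos le have "0 < L * ((x\<^sub>0 + 1) / 2 - x\<^sub>0)"
    by (meson order_less_le_trans)
  moreover have "0 < (x\<^sub>0 + 1) / 2 - x\<^sub>0"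
    using \<open>x\<^sub>0 < 1\<close> by simp
  ultimately show "0 < 1 / L"
    by (simp add: zero_less_mult_iff)
  fix t assume t: "t \<in> {x\<^sub>0<..<1}"
  with pos[OF t] le[OF t] \<open>0 < 1 / L\<close> show "1 / L / (t - x\<^sub>0) \<le> 1 / p t"
    by (simp add: field_simps)
qed

theorem lemma2p3:
  fixes a b :: "real \<Rightarrow> real" and x\<^sub>0 :: real
  assumes "x\<^sub>0 \<in> {0<..<1}"
    and "a x\<^sub>0 = 0" and "b x\<^sub>0 = 0"
    and "\<forall>x\<in>{0..1} - {x\<^sub>0}. a x > 0 \<and> b x > 0"
    and "(W1inf a \<and> W1inf b) \<or>
         (W11 a \<and> W11 b \<and>
          (\<exists>K1 K2 c1 c2 :: real. K1 > 0 \<and> K2 > 0 \<and> c1 > 0 \<and> c2 > 0 \<and> K1 + K2 \<ge> 1 \<and>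
             (\<forall>x\<in>{0..1}. \<bar>x - x\<^sub>0\<bar> powr K1 \<ge> c1 * a x \<and> \<bar>x - x\<^sub>0\<bar> powr K2 \<ge> c2 * b x)))"
  shows "\<not> L1 (\<lambda>x. 1 / (a x * b x)) \<and> (\<forall>dir u. K_ab dir a b u \<longrightarrow> u x\<^sub>0 = 0)"
proof -
  have pos: "0 < a t \<and> 0 < b t" if "t \<in> {x\<^sub>0<..<1}" for t
    using assms(1,4) that by auto
  have "\<exists>L. \<forall>t\<in>{x\<^sub>0<..<1}. a t * b t \<le> L * (t - x\<^sub>0)"
    using assms(5)
  proof (elim disjE conjE exE)
    assume "W1inf a" "W1inf b"
    with assms(1-3) pos show ?thesis
      by (intro W1inf_product_le_linear) (auto simp: less_imp_le)
  next
    fix K1 K2 c1 c2 :: real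
    assume "c1 > 0" "c2 > 0" "K1 + K2 \<ge> 1"
      and "\<forall>x\<in>{0..1}. \<bar>x - x\<^sub>0\<bar> powr K1 \<ge> c1 * a x \<and> \<bar>x - x\<^sub>0\<bar> powr K2 \<ge> c2 * b x"
    \<comment> \<open>the \<open>W\<^sup>1\<^sup>,\<^sup>1\<close> regularity is not needed in this case\<close>
    with assms(1) pos show ?thesis
      by (intro exI[of _ "1 / (c1 * c2)"] ballI powr_bounds_product_le_linear[of c1 c2 K1 K2 x\<^sub>0 a b])
         (auto simp: less_imp_le)
  qed
  then obtain L where "\<And>t. t \<in> {x\<^sub>0<..<1} \<Longrightarrow> a t * b t \<le> L * (t - x\<^sub>0)"
    by blast
  then obtain c where "0 < c" and c: "\<And>t. t \<in> {x\<^sub>0<..<1} \<Longrightarrow> c / (t - x\<^sub>0) \<le> 1 / (a t * b t)"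
    using inverse_ge_of_le_linear[of x\<^sub>0 "\<lambda>t. a t * b t"] assms(1) pos by auto
  show ?thesis
    using not_L1_ge_inverse[OF assms(1) \<open>0 < c\<close> c] K_ab_vanishes_at_singularity[OF assms(1) \<open>0 < c\<close> _ c] pos
    by auto
qed

end
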